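(* For $x\in(0,1/4]$ and integer $n\ge1$, let $S_n(x)=\sum_{k=0}^{n-1}\frac{(1-x)^k}{n-k}$. Then $$x\,S_n(x)\le\frac{7\ln(1/x)}{n}.$$ *)

theory Defs
  imports Complex_Main
begin

end

theory Submission
  imports Defs "HOL-Analysis.Harmonic_Numbers"
begin

text \<open>
  The sum obeys \<open>S\<^sub>n\<^sub>+\<^sub>1 = (1 - x) S\<^sub>n + 1/(n+1)\<close>. While \<open>n x \<le> 2\<close>, the trivial bound
  \<open>S\<^sub>n \<le> H\<^sub>n \<le> 1 + ln n\<close> suffices, because then \<open>ln n \<le> ln 2 + ln (1/x)\<close>. Beyond that
  point the bound \<open>x S\<^sub>n \<le> c/n\<close> propagates along the recursion: the contraction by
  \<open>1 - x\<close> more than compensates for the new term \<open>x/(n+1)\<close> as soon as \<open>c \<ge> 2\<close>.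
\<close>

definition damped_harm :: "real \<Rightarrow> nat \<Rightarrow> real" where
  "damped_harm q n = (\<Sum>k<n. q ^ k / real (n - k))"

lemma damped_harm_Suc: "damped_harm q (Suc n) = q * damped_harm q n + 1 / real (Suc n)"
proof -
  have "damped_harm q (Suc n) = q ^ 0 / real (Suc n - 0) + (\<Sum>k<n. q ^ Suc k / real (Suc n - Suc k))"
    unfolding damped_harm_def by (rule sum.lessThan_Suc_shift)
  then show ?thesis by (simp add: damped_harm_def sum_distrib_left)
qed

lemma damped_harm_nonneg: "0 \<le> q \<Longrightarrow> 0 \<le> damped_harm q n"
  unfolding damped_harm_def by (intro sum_nonneg) auto

lemma damped_harm_le_harm:
  assumes "0 \<le> q" "q \<le> 1"
  shows "damped_harm q n \<le> harm n"
proof (induction n)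
  case 0
  then show ?case by (simp add: damped_harm_def harm_def)
next
  case (Suc n)
  have "q * damped_harm q n \<le> damped_harm q n"
    using damped_harm_nonneg[OF assms(1)] assms by (simp add: mult_left_le_one_le)
  then show ?case
    using Suc.IH by (simp add: damped_harm_Suc harm_Suc inverse_eq_divide)
qed

lemma harm_le_one_plus_ln: "1 \<le> n \<Longrightarrow> harm n \<le> 1 + ln (real n)"
  using euler_mascheroni_sequence_decreasing[of 1 n] by (simp add: harm_def)

lemma damped_harm_step_le:
  fixes x c :: real
  assumes "0 < x" "x \<le> 1" "2 \<le> c" "0 < n" "2 \<le> real (Suc n) * x"
  shows "(1 - x) * (c / real n) + x / real (Suc n) \<le> c / real (Suc n)"
proof -
  have "2 * (real (Suc n) * x - 1) \<le> c * (real (Suc n) * x - 1)"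
    using assms by (intro mult_right_mono) auto
  then have "(1 - x) * c * real (Suc n) + x * real n \<le> c * real n"
    using assms by (simp add: algebra_simps)
  then have "((1 - x) * c * real (Suc n) + x * real n) / (real n * real (Suc n))
      \<le> c * real n / (real n * real (Suc n))"
    by (intro divide_right_mono) auto
  moreover have "(1 - x) * (c / real n) + x / real (Suc n)
      = ((1 - x) * c * real (Suc n) + x * real n) / (real n * real (Suc n))"
    using assms by (simp add: field_simps)
  ultimately show ?thesis
    using assms by simp
qed

lemma damped_harm_bound_propagates:
  fixes x c :: real
  assumes "0 < x" "x \<le> 1" "2 \<le> c"
    and initial: "\<And>m. 1 \<le> m \<Longrightarrow> real m * x \<le> 2 \<Longrightarrow> x * damped_harm (1 - x) m \<le> c / real m"
    and "1 \<le> n"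
  shows "x * damped_harm (1 - x) n \<le> c / real n"
  using \<open>1 \<le> n\<close>
proof (induction n rule: nat_induct_at_least)
  case base
  then show ?case using initial[of 1] assms by simp
next
  case (Suc n)
  show ?case
  proof (cases "real (Suc n) * x \<le> 2")
    case True
    then show ?thesis using initial[of "Suc n"] by simp
  next
    case False
    have "x * damped_harm (1 - x) (Suc n) = (1 - x) * (x * damped_harm (1 - x) n) + x / real (Suc n)"
      by (simp add: damped_harm_Suc algebra_simps)
    also have "\<dots> \<le> (1 - x) * (c / real n) + x / real (Suc n)"
      using Suc.IH assms by (intro add_right_mono mult_left_mono) auto
    also have "\<dots> \<le> c / real (Suc n)"
      using False Suc.hyps assms by (intro damped_harm_step_le) auto
    finally show ?thesis .
  qed
qed

lemma ln_inverse_ge_four_thirds: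
  fixes x :: real
  assumes "0 < x" "x \<le> 1/4"
  shows "4/3 \<le> ln (1 / x)"
proof -
  have "ln (4::real) = 2 * ln 2"
    using ln_realpow[of 2 2] by simp
  moreover have "ln 4 \<le> ln (1 / x)"
    using assms by (intro ln_mono) (auto simp: field_simps)
  ultimately show ?thesis
    using ln2_ge_two_thirds by linarith
qed

lemma damped_harm_bound_initial:
  fixes x :: real
  assumes "0 < x" "x \<le> 1/4" "1 \<le> m" "real m * x \<le> 2"
  shows "x * damped_harm (1 - x) m \<le> 7 * ln (1 / x) / real m"
proof -
  have ln_m: "ln (real m) = ln (real m * x) + ln (1 / x)"
    using assms by (simp add: ln_mult ln_div)
  have "ln (real m * x) \<le> ln 2"
    using assms by (intro ln_mono) auto
  with ln_m have ln_m_le: "ln (real m) \<le> ln 2 + ln (1 / x)"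
    by linarith
  have "damped_harm (1 - x) m \<le> 1 + ln (real m)"
    using damped_harm_le_harm[of "1 - x" m] harm_le_one_plus_ln[OF assms(3)] assms by linarith
  then have "real m * (x * damped_harm (1 - x) m) \<le> real m * x * (1 + ln (real m))"
    unfolding mult.assoc using assms by (intro mult_left_mono) auto
  also have "\<dots> \<le> 2 * (1 + ln (real m))"
    using assms by (intro mult_right_mono) auto
  also have "\<dots> = 2 + 2 * ln (real m)"
    by simp
  also have "\<dots> \<le> 7 * ln (1 / x)"
    using ln_m_le ln2_le_25_over_36 ln_inverse_ge_four_thirds[OF assms(1,2)] by linarith
  finally show ?thesis
    using assms by (simp add: pos_le_divide_eq mult.commute)
qed

theorem lemma3:
  fixes x :: real and n :: nat
  assumes "0 < x" and "x \<le> 1/4" and "n \<ge> 1"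
  shows "x * (\<Sum>k<n. (1 - x) ^ k / real (n - k)) \<le> 7 * ln (1 / x) / real n"
proof -
  have "2 \<le> 7 * ln (1 / x)"
    using ln_inverse_ge_four_thirds[OF assms(1,2)] by linarith
  then have "x * damped_harm (1 - x) n \<le> 7 * ln (1 / x) / real n"
    using damped_harm_bound_propagates[OF assms(1) _ _ damped_harm_bound_initial[OF assms(1,2)] assms(3)]
      assms(2) by simp
  then show ?thesis
    by (simp add: damped_harm_def)
qed

end
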